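(* Let $\sigma$ be a fixed permutation of $[k]$. The probability that a uniformly random involution of $[n]$ contains $\sigma$ as a subsequence is $1/k!+o(1)$ as $n\to\infty$.
   Context: $[n]=\{1,\dots,n\}$. An involution of $[n]$ is a permutation $\phi$ with $\phi^2$ the identity. A permutation $\phi$ of $[n]$ ($n\ge k$) contains the permutation $\sigma$ of $[k]$ as a subsequence if, in the word $\phi(1)\phi(2)\cdots\phi(n)$, the letters $1,\dots,k$ appear in the order $\sigma(1),\sigma(2),\dots,\sigma(k)$. *)

theory Defs
  imports Complex_Main "HOL-Combinatorics.Permutations"
begin

definition involutions :: "nat \<Rightarrow> (nat \<Rightarrow> nat) set" where
  "involutions n = {\<phi>. \<phi> permutes {1..n} \<and> \<phi> \<circ> \<phi> = id}"

definition contains_subseq :: "nat \<Rightarrow> (nat \<Rightarrow> nat) \<Rightarrow> nat \<Rightarrow> (nat \<Rightarrow> nat) \<Rightarrow> bool" where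
  "contains_subseq n \<phi> k \<sigma> \<longleftrightarrow>
     (\<exists>p :: nat \<Rightarrow> nat. (\<forall>i\<in>{1..k}. p i \<in> {1..n} \<and> \<phi> (p i) = \<sigma> i) \<and>
                        (\<forall>i\<in>{1..<k}. p i < p (Suc i)))"

end

theory Submission
  imports Defs "HOL-Real_Asymp.Real_Asymp"
begin

(* In the word of an involution f the letter \<sigma> i stands at position f (\<sigma> i), so f contains \<sigma>
   exactly when f (\<sigma> 1) < ... < f (\<sigma> k).  Call f spread if it maps [k] into the complement
   of [k].  Conjugation by a permutation a of [k] preserves spreadness, and for spread f it
   satisfies (a f a\<^sup>-\<^sup>1) (a i) = f i on [k]; so it carries the spread involutions whose values
   increase along \<rho> onto those whose values increase along a \<circ> \<rho>.  Hence the k! order classes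
   of spread involutions are equinumerous, and those containing \<sigma> form one of them.  A
   non-spread involution has f i = j for some i, j \<le> k, so there are at most
   k^2 (I(n-1) + I(n-2)) of them, I(n) being the number of involutions of [n]; the recurrence
   I(n+1) = I(n) + n I(n-1) gives I(n+1)/I(n) \<ge> sqrt(n+1), so this is o(I(n)). *)

abbreviation involution_count :: "nat \<Rightarrow> nat" where
  "involution_count n \<equiv> card (involutions n)"

section \<open>Involutions and conjugation\<close>

lemma involutions_iff:
  "f \<in> involutions n \<longleftrightarrow> f permutes {1..n} \<and> (\<forall>x. f (f x) = x)"
  by (auto simp: involutions_def fun_eq_iff)

lemma finite_involutions: "finite (involutions n)"
  by (rule finite_subset[OF _ finite_permutations[of "{1..n}"]]) (auto simp: involutions_def)

lemma card_involutions_pos: "involution_count n > 0"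
  using finite_involutions[of n]
  by (auto simp: card_gt_0_iff involutions_def intro!: exI[of _ id] permutes_id)

lemma involution_transpose_commute:
  assumes "f \<circ> f = id" and "f ` {a, b} = {a, b}"
  shows "transpose a b \<circ> f = f \<circ> transpose a b"
proof -
  have "bij f" and "inv f = f"
    using assms(1) by (auto intro: o_bij inv_unique_comp)
  moreover have "transpose (f a) (f b) = transpose a b"
    using assms(2) by (auto simp: doubleton_eq_iff transpose_commute)
  ultimately show ?thesis
    by (simp add: transpose_comp_eq)
qed

lemma transpose_comp_in_involutions:
  assumes "f \<in> involutions n" and "a \<in> {1..n}" "b \<in> {1..n}" and "f ` {a, b} = {a, b}"
  shows "transpose a b \<circ> f \<in> involutions n"
proof -
  have "f (transpose a b x) = transpose a b (f x)" for x
    using involution_transpose_commute[of f a b] assms(1,4) by (simp add: involutions_def fun_eq_iff)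
  then show ?thesis
    using assms by (simp add: involutions_iff permutes_compose permutes_swap_id)
qed

lemma conj_in_involutions:
  assumes "t permutes {1..n}" and "f \<in> involutions n"
  shows "t \<circ> f \<circ> inv t \<in> involutions n"
  using assms permutes_inverses[OF assms(1)]
  by (simp add: involutions_iff permutes_compose permutes_inv)

lemma bij_betw_conj_involutions:
  assumes "t permutes {1..n}"
  shows "bij_betw (\<lambda>f. t \<circ> f \<circ> inv t) (involutions n) (involutions n)"
proof (rule bij_betw_byWitness[where f' = "\<lambda>f. inv t \<circ> f \<circ> t"])
  show "\<forall>f\<in>involutions n. inv t \<circ> (t \<circ> f \<circ> inv t) \<circ> t = f"
    and "\<forall>f\<in>involutions n. t \<circ> (inv t \<circ> f \<circ> t) \<circ> inv t = f"
    using permutes_inverses[OF assms] by (simp_all add: fun_eq_iff)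
  show "(\<lambda>f. t \<circ> f \<circ> inv t) ` involutions n \<subseteq> involutions n"
    using conj_in_involutions[OF assms] by auto
  show "(\<lambda>f. inv t \<circ> f \<circ> t) ` involutions n \<subseteq> involutions n"
    using conj_in_involutions[OF permutes_inv[OF assms]] assms by (auto simp: permutes_inv_inv)
qed

lemma card_involutions_conj_invariant:
  assumes "t permutes {1..n}" and "\<And>f. f \<in> involutions n \<Longrightarrow> Q (t \<circ> f \<circ> inv t) \<longleftrightarrow> P f"
  shows "card {f \<in> involutions n. P f} = card {f \<in> involutions n. Q f}"
  using bij_betw_same_card[OF bij_betw_Collect[OF bij_betw_conj_involutions[OF assms(1)]]] assms(2)
  by blast

lemma card_involutions_mapping_conj:
  assumes "t permutes {1..n}"
  shows "card {f \<in> involutions n. f (t i) = t j} = card {f \<in> involutions n. f i = j}"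
proof (rule card_involutions_conj_invariant[OF assms, symmetric])
  fix f
  show "(t \<circ> f \<circ> inv t) (t i) = t j \<longleftrightarrow> f i = j"
    using permutes_inj[OF assms] by (simp add: permutes_inverses[OF assms] inj_eq)
qed

section \<open>Involutions with a prescribed value\<close>

lemma involutions_mono: "m \<le> n \<Longrightarrow> involutions m \<subseteq> involutions n"
  using permutes_subset[of _ "{1..m}" "{1..n}"] by (auto simp: involutions_def)

lemma involution_fixes_above: "f \<in> involutions m \<Longrightarrow> m < x \<Longrightarrow> f x = x"
  using permutes_not_in[of f "{1..m}" x] by (simp add: involutions_def)

lemma involutions_restrict:
  assumes "f \<in> involutions n" and "\<And>x. m < x \<Longrightarrow> x \<le> n \<Longrightarrow> f x = x"
  shows "f \<in> involutions m"
proof -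
  have f: "f permutes {1..n}" "f \<circ> f = id"
    using assms(1) by (simp_all add: involutions_def)
  have "f permutes {1..m}"
    by (rule permutes_superset[OF f(1)]) (use assms(2) in auto)
  with f(2) show ?thesis
    by (simp add: involutions_def)
qed

lemma involutions_fixing_last:
  "{f \<in> involutions (Suc m). f (Suc m) = Suc m} = involutions m"
proof (intro equalityI subsetI)
  fix f assume "f \<in> {f \<in> involutions (Suc m). f (Suc m) = Suc m}"
  then show "f \<in> involutions m"
    by (auto intro: involutions_restrict simp: le_Suc_eq)
next
  fix f assume "f \<in> involutions m"
  then show "f \<in> {f \<in> involutions (Suc m). f (Suc m) = Suc m}"
    using involutions_mono[of m "Suc m"] involution_fixes_above[of f m "Suc m"] by auto
qed

lemma card_involutions_fixing:
  assumes "i \<in> {1..n}"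
  shows "card {f \<in> involutions n. f i = i} = involution_count (n - 1)"
proof -
  have "card {f \<in> involutions n. f i = i} = card {f \<in> involutions n. f n = n}"
    using card_involutions_mapping_conj[of "transpose i n" n i i] assms
    by (simp add: permutes_swap_id)
  also have "\<dots> = involution_count (n - 1)"
    using involutions_fixing_last[of "n - 1"] assms by simp
  finally show ?thesis .
qed

lemma card_involutions_swapping_last:
  assumes "n \<ge> 2"
  shows "card {f \<in> involutions n. f n = n - 1} = involution_count (n - 2)"
proof -
  define T where "T = transpose (n - 1) n"
  have T_in: "n - 1 \<in> {1..n}" "n \<in> {1..n}"
    using assms by auto
  have "bij_betw ((\<circ>) T) (involutions (n - 2)) {f \<in> involutions n. f n = n - 1}"
  proof (rule bij_betw_byWitness[where f' = "(\<circ>) T"])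
    show "\<forall>f\<in>involutions (n - 2). T \<circ> (T \<circ> f) = f"
      and "\<forall>f\<in>{f \<in> involutions n. f n = n - 1}. T \<circ> (T \<circ> f) = f"
      by (simp_all add: T_def fun_eq_iff)
    show "(\<circ>) T ` involutions (n - 2) \<subseteq> {f \<in> involutions n. f n = n - 1}"
    proof clarify
      fix g assume g: "g \<in> involutions (n - 2)"
      have "g (n - 1) = n - 1" "g n = n"
        using g assms by (auto intro: involution_fixes_above)
      then show "T \<circ> g \<in> involutions n \<and> (T \<circ> g) n = n - 1"
        using g involutions_mono[of "n - 2" n] T_in
        by (auto simp: T_def intro!: transpose_comp_in_involutions)
    qed
    show "(\<circ>) T ` {f \<in> involutions n. f n = n - 1} \<subseteq> involutions (n - 2)"
    proof clarify
      fix f assume f: "f \<in> involutions n" "f n = n - 1"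
      then have "f (n - 1) = n"
        by (metis involutions_iff)
      then have "T \<circ> f \<in> involutions n"
        using f T_in by (auto simp: T_def intro!: transpose_comp_in_involutions)
      then show "T \<circ> f \<in> involutions (n - 2)"
      proof (rule involutions_restrict)
        fix x assume "n - 2 < x" "x \<le> n"
        then have "x = n - 1 \<or> x = n"
          by auto
        then show "(T \<circ> f) x = x"
          using f \<open>f (n - 1) = n\<close> by (auto simp: T_def)
      qed
    qed
  qed
  from bij_betw_same_card[OF this] show ?thesis
    by simp
qed

lemma card_involutions_mapping_last:
  assumes "j \<in> {1..n}" and "j \<noteq> n"
  shows "card {f \<in> involutions n. f n = j} = involution_count (n - 2)"
proof -
  have "transpose j (n - 1) permutes {1..n}"
    using assms by (intro permutes_swap_id) auto
  moreover have "transpose j (n - 1) n = n"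
    using assms by (auto simp: transpose_def)
  ultimately have "card {f \<in> involutions n. f n = n - 1} = card {f \<in> involutions n. f n = j}"
    using card_involutions_mapping_conj[of "transpose j (n - 1)" n n j] by simp
  with card_involutions_swapping_last[of n] assms show ?thesis
    by simp
qed

lemma card_involutions_swapping:
  assumes "i \<in> {1..n}" "j \<in> {1..n}" and "i \<noteq> j"
  shows "card {f \<in> involutions n. f i = j} = involution_count (n - 2)"
proof -
  have "transpose i n permutes {1..n}"
    using assms by (intro permutes_swap_id) auto
  then have "card {f \<in> involutions n. f i = j} = card {f \<in> involutions n. f n = transpose i n j}"
    using card_involutions_mapping_conj[of "transpose i n" n i j] by simp
  also have "\<dots> = involution_count (n - 2)"
    using assms by (intro card_involutions_mapping_last) (auto simp: transpose_def)
  finally show ?thesis .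
qed

lemma involution_count_Suc:
  "involution_count (Suc m) = involution_count m + m * involution_count (m - 1)"
proof -
  let ?fibre = "\<lambda>j. {f \<in> involutions (Suc m). f (Suc m) = j}"
  have partition: "involutions (Suc m) = (\<Union>j\<in>{1..Suc m}. ?fibre j)"
    using permutes_in_image[of _ "{1..Suc m}" "Suc m"] by (auto simp: involutions_def)
  have "involution_count (Suc m) = (\<Sum>j\<in>{1..Suc m}. card (?fibre j))"
    by (subst partition, rule card_UN_disjoint) (auto simp: finite_involutions)
  also have "\<dots> = card (?fibre (Suc m)) + (\<Sum>j\<in>{1..m}. card (?fibre j))"
    by (simp add: atLeastAtMostSuc_conv)
  also have "\<dots> = involution_count m + (\<Sum>j\<in>{1..m}. involution_count (m - 1))"
    by (simp add: involutions_fixing_last card_involutions_mapping_last)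
  finally show ?thesis
    by simp
qed

section \<open>Growth of the number of involutions\<close>

definition involution_ratio :: "nat \<Rightarrow> real" where
  "involution_ratio m = involution_count (Suc m) / involution_count m"

lemma involution_ratio_Suc: "involution_ratio (Suc m) = 1 + Suc m / involution_ratio m"
  using card_involutions_pos[of m] card_involutions_pos[of "Suc m"]
  by (simp add: involution_ratio_def involution_count_Suc[of "Suc m"] field_simps)

lemma sqrt_square_add_two_le:
  fixes s :: real
  assumes "s \<ge> 0"
  shows "sqrt (s\<^sup>2 + 2) \<le> 1 + (s\<^sup>2 + 1) / (1 + s)"
proof (rule real_le_lsqrt)
  have rhs: "1 + (s\<^sup>2 + 1) / (1 + s) = (s\<^sup>2 + s + 2) / (1 + s)"
    using assms by (simp add: field_simps)
  then show "0 \<le> 1 + (s\<^sup>2 + 1) / (1 + s)"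
    using assms by simp
  have "(s\<^sup>2 + s + 2)\<^sup>2 = (s\<^sup>2 + 2) * (1 + s)\<^sup>2 + 2 * (s\<^sup>2 + 1)"
    by algebra
  then have "(s\<^sup>2 + 2) * (1 + s)\<^sup>2 \<le> (s\<^sup>2 + s + 2)\<^sup>2"
    by simp
  then show "s\<^sup>2 + 2 \<le> (1 + (s\<^sup>2 + 1) / (1 + s))\<^sup>2"
    using assms by (simp add: rhs power_divide pos_le_divide_eq)
qed

(* x \<mapsto> 1 + (m + 1) / x is decreasing, so the lower bound at m + 1 needs the upper one at m. *)
lemma involution_ratio_bounds: "sqrt (Suc m) \<le> involution_ratio m \<and> involution_ratio m \<le> 1 + sqrt m"
proof (induction m)
  case 0
  then show ?case
    using card_involutions_pos[of 0] by (simp add: involution_ratio_def involution_count_Suc[of 0])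
next
  case (Suc m)
  let ?x = "involution_ratio m"
  have lower: "sqrt (Suc m) \<le> ?x" and upper: "?x \<le> 1 + sqrt m"
    using Suc.IH by simp_all
  have pos: "0 < sqrt (Suc m)"
    by simp
  with lower have "0 < ?x"
    by linarith
  have "real (Suc m) / ?x \<le> real (Suc m) / sqrt (Suc m)"
    using lower pos \<open>0 < ?x\<close> by (intro divide_left_mono) auto
  also have "\<dots> = sqrt (Suc m)"
    by (rule real_div_sqrt) simp
  finally have "involution_ratio (Suc m) \<le> 1 + sqrt (Suc m)"
    by (simp add: involution_ratio_Suc)
  moreover have "sqrt (Suc (Suc m)) \<le> involution_ratio (Suc m)"
  proof -
    have "sqrt (Suc (Suc m)) \<le> 1 + (real m + 1) / (1 + sqrt m)"
      using sqrt_square_add_two_le[of "sqrt m"] by (simp add: add.commute)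
    also have "\<dots> \<le> 1 + (real m + 1) / ?x"
      using upper \<open>0 < ?x\<close> by (intro add_left_mono divide_left_mono) auto
    finally show ?thesis
      by (simp add: involution_ratio_Suc add.commute)
  qed
  ultimately show ?case
    by simp
qed

lemma involution_count_pred_ratio_tendsto_0:
  "(\<lambda>n. involution_count (n - 1) / involution_count n) \<longlonglongrightarrow> 0"
proof (rule tendsto_sandwich[OF _ _ tendsto_const])
  show "\<forall>\<^sub>F n in sequentially. 0 \<le> involution_count (n - 1) / involution_count n"
    by simp
  have bound: "involution_count (n - 1) / involution_count n \<le> 1 / sqrt n" if "n \<ge> 1" for n
  proof -
    have "sqrt n \<le> involution_ratio (n - 1)"
      using involution_ratio_bounds[of "n - 1"] that by simp
    moreover have "involution_count (n - 1) / involution_count n = 1 / involution_ratio (n - 1)"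
      using that by (simp add: involution_ratio_def)
    ultimately show ?thesis
      using that by (simp add: frac_le)
  qed
  then show "\<forall>\<^sub>F n in sequentially. involution_count (n - 1) / involution_count n \<le> 1 / sqrt n"
    unfolding eventually_sequentially using bound by blast
  show "(\<lambda>n. 1 / sqrt (real n)) \<longlonglongrightarrow> 0"
    by real_asymp
qed

lemma involution_count_pred2_ratio_tendsto_0:
  "(\<lambda>n. involution_count (n - 2) / involution_count n) \<longlonglongrightarrow> 0"
proof (rule LIMSEQ_offset[where k = 2], rule tendsto_sandwich[OF _ _ tendsto_const])
  show "\<forall>\<^sub>F n in sequentially. 0 \<le> involution_count (n + 2 - 2) / involution_count (n + 2)"
    by simp
  have "(real n + 1) * involution_count n \<le> involution_count (Suc (Suc n))" for n
    using involution_count_Suc[of "Suc n"] by (simp add: algebra_simps)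
  then have "involution_count n / involution_count (Suc (Suc n)) \<le> 1 / (real n + 1)" for n
    using card_involutions_pos[of "Suc (Suc n)"] by (simp add: divide_simps mult.commute)
  then show "\<forall>\<^sub>F n in sequentially. involution_count (n + 2 - 2) / involution_count (n + 2) \<le> 1 / (real n + 1)"
    by simp
  show "(\<lambda>n. 1 / (real n + 1)) \<longlonglongrightarrow> 0"
    by real_asymp
qed

section \<open>Sorting permutations\<close>

lemma strict_mono_on_atLeastAtMost_iff_Suc:
  fixes g :: "nat \<Rightarrow> 'a::order"
  shows "strict_mono_on {1..k} g \<longleftrightarrow> (\<forall>i\<in>{1..<k}. g i < g (Suc i))"
proof
  assume "strict_mono_on {1..k} g"
  then show "\<forall>i\<in>{1..<k}. g i < g (Suc i)"
    using strict_mono_onD[of "{1..k}" g] by auto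
next
  assume step: "\<forall>i\<in>{1..<k}. g i < g (Suc i)"
  show "strict_mono_on {1..k} g"
  proof (rule strict_mono_onI)
    fix r s :: nat assume "r \<in> {1..k}" "s \<in> {1..k}" "r < s"
    then show "g r < g s"
      using step lift_Suc_mono_less_ivl[where N = "{1..<k}" and f = g and n = r and n' = s] by auto
  qed
qed

lemma permutes_strict_mono_on_eq_id:
  fixes p :: "'a::linorder \<Rightarrow> 'a"
  assumes "p permutes A" and "finite A" and "strict_mono_on A p"
  shows "p = id"
proof -
  let ?xs = "sorted_list_of_set A"
  have "sorted_wrt (<) (map p ?xs)"
    using assms(2,3) by (auto simp: sorted_wrt_map strict_mono_on_def
        intro: sorted_wrt_mono_rel[OF _ strict_sorted_list_of_set])
  moreover have "set (map p ?xs) = set ?xs"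
    using assms(1,2) by (simp add: permutes_image)
  ultimately have "map p ?xs = map id ?xs"
    using strict_sorted_equal[OF strict_sorted_list_of_set[of A]] by simp
  then have "\<forall>x\<in>A. p x = x"
    using assms(2) by (simp only: map_eq_conv set_sorted_list_of_set id_apply)
  then show ?thesis
    using permutes_not_in[OF assms(1)] by (auto simp: fun_eq_iff)
qed

lemma permutes_sorting_unique:
  fixes g :: "'a::linorder \<Rightarrow> 'b::linorder"
  assumes "finite A" and "r permutes A" "r' permutes A"
    and "strict_mono_on A (g \<circ> r)" "strict_mono_on A (g \<circ> r')"
  shows "r = r'"
proof -
  let ?p = "inv r' \<circ> r"
  have p: "?p permutes A"
    using assms(2,3) by (intro permutes_compose permutes_inv)
  have "strict_mono_on A ?p"
  proof (rule strict_mono_onI)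
    fix x y assume xy: "x \<in> A" "y \<in> A" "x < y"
    then have "(g \<circ> r') (?p x) < (g \<circ> r') (?p y)"
      using strict_mono_onD[OF assms(4)] by (simp add: permutes_inverses[OF assms(3)])
    moreover have "?p x \<in> A" "?p y \<in> A"
      using permutes_in_image[OF p] xy by auto
    ultimately show "?p x < ?p y"
      using strict_mono_on_less[OF assms(5)] by blast
  qed
  then have "?p = id"
    by (rule permutes_strict_mono_on_eq_id[OF p assms(1)])
  then show ?thesis
    by (simp add: fun_eq_iff) (metis permutes_inverses(1)[OF assms(3)])
qed

lemma ex_permutes_sorting:
  fixes g :: "nat \<Rightarrow> 'b::linorder"
  assumes "inj_on g {1..k}"
  obtains r where "r permutes {1..k}" and "strict_mono_on {1..k} (g \<circ> r)"
proof -
  let ?ys = "sorted_list_of_set (g ` {1..k})"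
  have ys: "sorted_wrt (<) ?ys" "length ?ys = k"
    using card_image[OF assms] by simp_all
  have ys_in: "?ys ! (i - 1) \<in> g ` {1..k}" if "i \<in> {1..k}" for i
    using that ys(2) nth_mem[of "i - 1" ?ys] by auto
  define r where "r i = (if i \<in> {1..k} then inv_into {1..k} g (?ys ! (i - 1)) else i)" for i
  have r_in: "r i \<in> {1..k}" if "i \<in> {1..k}" for i
    using inv_into_into[OF ys_in[OF that]] that by (simp add: r_def)
  have g_r: "g (r i) = ?ys ! (i - 1)" if "i \<in> {1..k}" for i
    using f_inv_into_f[OF ys_in[OF that]] that by (simp add: r_def)
  have "inj_on r {1..k}"
  proof (rule inj_onI)
    fix i j assume ij: "i \<in> {1..k}" "j \<in> {1..k}" "r i = r j"
    then have "?ys ! (i - 1) = ?ys ! (j - 1)"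
      using g_r by metis
    moreover have "distinct ?ys"
      by simp
    moreover have "i - 1 < length ?ys" "j - 1 < length ?ys"
      using ij ys(2) by auto
    ultimately have "i - 1 = j - 1"
      using nth_eq_iff_index_eq by blast
    then show "i = j"
      using ij by (simp only: atLeastAtMost_iff) linarith
  qed
  moreover have "r ` {1..k} = {1..k}"
    using calculation r_in by (intro endo_inj_surj) auto
  ultimately have "r permutes {1..k}"
    by (intro bij_imp_permutes) (auto simp: bij_betw_def r_def)
  moreover have "strict_mono_on {1..k} (g \<circ> r)"
    using ys by (auto intro!: strict_mono_onI simp: g_r sorted_wrt_nth_less)
  ultimately show ?thesis
    using that by blast
qed

lemma contains_subseq_iff_strict_mono_on:
  assumes f: "f \<in> involutions n" and \<sigma>: "\<sigma> permutes {1..k}" and "k \<le> n"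
  shows "contains_subseq n f k \<sigma> \<longleftrightarrow> strict_mono_on {1..k} (f \<circ> \<sigma>)"
proof -
  have ff: "f (f x) = x" for x
    using f by (simp add: involutions_iff)
  have "contains_subseq n f k \<sigma> \<longleftrightarrow> (\<forall>i\<in>{1..<k}. f (\<sigma> i) < f (\<sigma> (Suc i)))"
  proof
    assume "contains_subseq n f k \<sigma>"
    then obtain p where p: "\<forall>i\<in>{1..k}. p i \<in> {1..n} \<and> f (p i) = \<sigma> i"
      and increasing: "\<forall>i\<in>{1..<k}. p i < p (Suc i)"
      unfolding contains_subseq_def by blast
    have "p i = f (\<sigma> i)" if "i \<in> {1..k}" for i
      using p that ff by metis
    then show "\<forall>i\<in>{1..<k}. f (\<sigma> i) < f (\<sigma> (Suc i))"
      using increasing by simp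
  next
    assume "\<forall>i\<in>{1..<k}. f (\<sigma> i) < f (\<sigma> (Suc i))"
    moreover have "f (\<sigma> i) \<in> {1..n}" if "i \<in> {1..k}" for i
    proof -
      have "\<sigma> i \<in> {1..n}"
        using that \<open>k \<le> n\<close> permutes_in_image[OF \<sigma>, of i] by simp
      then show ?thesis
        using f permutes_in_image[of f "{1..n}" "\<sigma> i"] by (simp add: involutions_iff)
    qed
    ultimately show "contains_subseq n f k \<sigma>"
      unfolding contains_subseq_def using ff by (intro exI[of _ "f \<circ> \<sigma>"]) auto
  qed
  then show ?thesis
    by (simp only: strict_mono_on_atLeastAtMost_iff_Suc o_apply)
qed

section \<open>Order classes of spread involutions\<close>

definition spread_involutions :: "nat \<Rightarrow> nat \<Rightarrow> (nat \<Rightarrow> nat) set" where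
  "spread_involutions n k = {f \<in> involutions n. disjnt (f ` {1..k}) {1..k}}"

definition order_class :: "nat \<Rightarrow> nat \<Rightarrow> (nat \<Rightarrow> nat) \<Rightarrow> (nat \<Rightarrow> nat) set" where
  "order_class n k \<rho> =
     {f \<in> involutions n. disjnt (f ` {1..k}) {1..k} \<and> strict_mono_on {1..k} (f \<circ> \<rho>)}"

lemma disjnt_conj_image_iff:
  assumes "a permutes A"
  shows "disjnt ((a \<circ> f \<circ> inv a) ` A) A \<longleftrightarrow> disjnt (f ` A) A"
proof -
  have "(a \<circ> f \<circ> inv a) ` A = (a \<circ> f) ` (inv a ` A)"
    by (simp only: image_comp)
  also have "\<dots> = a ` (f ` A)"
    using permutes_image[OF permutes_inv[OF assms]] by (simp add: image_comp)
  finally have "(a \<circ> f \<circ> inv a) ` A = a ` (f ` A)" .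
  moreover have "a ` (f ` A) \<inter> A = a ` (f ` A \<inter> A)"
    using permutes_inj[OF assms] permutes_image[OF assms] by (simp add: image_Int)
  ultimately show ?thesis
    by (simp add: disjnt_def)
qed

lemma strict_mono_on_cong:
  "(\<And>x. x \<in> A \<Longrightarrow> f x = g x) \<Longrightarrow> strict_mono_on A f \<longleftrightarrow> strict_mono_on A g"
  by (auto simp: strict_mono_on_def)

lemma card_order_class_eq:
  assumes \<rho>: "\<rho> permutes {1..k}" and \<sigma>: "\<sigma> permutes {1..k}" and "k \<le> n"
  shows "card (order_class n k \<rho>) = card (order_class n k \<sigma>)"
proof -
  define a where "a = \<sigma> \<circ> inv \<rho>"
  have a: "a permutes {1..k}"
    unfolding a_def using \<rho> \<sigma> by (intro permutes_compose permutes_inv)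
  have a_\<sigma>: "inv a (\<sigma> i) = \<rho> i" for i
    unfolding permutes_inv_eq[OF a] by (simp add: a_def permutes_inverses(2)[OF \<rho>])
  have "strict_mono_on {1..k} ((a \<circ> f \<circ> inv a) \<circ> \<sigma>) \<longleftrightarrow> strict_mono_on {1..k} (f \<circ> \<rho>)"
    if spread: "disjnt (f ` {1..k}) {1..k}" for f
  proof (rule strict_mono_on_cong)
    fix i assume "i \<in> {1..k}"
    then have "\<rho> i \<in> {1..k}"
      by (simp only: permutes_in_image[OF \<rho>])
    then have "f (\<rho> i) \<notin> {1..k}"
      using spread unfolding disjnt_def by blast
    then show "(a \<circ> f \<circ> inv a \<circ> \<sigma>) i = (f \<circ> \<rho>) i"
      using a_\<sigma> permutes_not_in[OF a] by simp
  qed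
  then have "disjnt ((a \<circ> f \<circ> inv a) ` {1..k}) {1..k} \<and> strict_mono_on {1..k} (a \<circ> f \<circ> inv a \<circ> \<sigma>)
      \<longleftrightarrow> disjnt (f ` {1..k}) {1..k} \<and> strict_mono_on {1..k} (f \<circ> \<rho>)" for f
    using disjnt_conj_image_iff[OF a] by blast
  moreover have "a permutes {1..n}"
    by (rule permutes_subset[OF a]) (use \<open>k \<le> n\<close> in auto)
  ultimately show ?thesis
    unfolding order_class_def by (rule card_involutions_conj_invariant[rotated])
qed

lemma card_spread_involutions:
  assumes \<sigma>: "\<sigma> permutes {1..k}" and "k \<le> n"
  shows "card (spread_involutions n k) = fact k * card (order_class n k \<sigma>)"
proof -
  let ?P = "{\<rho>. \<rho> permutes {1..k}}"
  have partition: "spread_involutions n k = (\<Union>\<rho>\<in>?P. order_class n k \<rho>)"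
  proof (intro equalityI subsetI)
    fix f assume f: "f \<in> spread_involutions n k"
    then have "inj_on f {1..k}"
      by (auto simp: spread_involutions_def involutions_def intro: inj_on_subset permutes_inj)
    then obtain \<rho> where "\<rho> permutes {1..k}" "strict_mono_on {1..k} (f \<circ> \<rho>)"
      by (rule ex_permutes_sorting)
    then show "f \<in> (\<Union>\<rho>\<in>?P. order_class n k \<rho>)"
      using f by (auto simp: order_class_def spread_involutions_def)
  qed (auto simp: order_class_def spread_involutions_def)
  have disjoint: "order_class n k \<rho> \<inter> order_class n k \<rho>' = {}"
    if "\<rho> \<in> ?P" "\<rho>' \<in> ?P" "\<rho> \<noteq> \<rho>'" for \<rho> \<rho>'
    using that permutes_sorting_unique[of "{1..k}" \<rho> \<rho>'] by (auto simp: order_class_def)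
  have "card (spread_involutions n k) = (\<Sum>\<rho>\<in>?P. card (order_class n k \<rho>))"
    unfolding partition using disjoint
    by (intro card_UN_disjoint) (auto simp: finite_permutations order_class_def finite_involutions)
  also have "\<dots> = (\<Sum>\<rho>\<in>?P. card (order_class n k \<sigma>))"
    using card_order_class_eq[OF _ \<sigma> \<open>k \<le> n\<close>] by simp
  also have "\<dots> = fact k * card (order_class n k \<sigma>)"
    by (simp add: card_permutations)
  finally show ?thesis .
qed

lemma card_non_spread_involutions_le:
  assumes "k \<le> n"
  shows "card (involutions n - spread_involutions n k)
    \<le> k * k * (involution_count (n - 1) + involution_count (n - 2))"
proof -
  let ?maps = "\<lambda>i j. {f \<in> involutions n. f i = j}"
  have "involutions n - spread_involutions n k \<subseteq> (\<Union>i\<in>{1..k}. \<Union>j\<in>{1..k}. ?maps i j)"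
    by (auto simp: spread_involutions_def disjnt_iff)
  then have "card (involutions n - spread_involutions n k) \<le> card (\<Union>i\<in>{1..k}. \<Union>j\<in>{1..k}. ?maps i j)"
    by (rule card_mono[rotated]) (simp add: finite_involutions)
  also have "\<dots> \<le> (\<Sum>i\<in>{1..k}. \<Sum>j\<in>{1..k}. card (?maps i j))"
    by (rule order.trans[OF card_UN_le sum_mono[OF card_UN_le]]) simp_all
  also have "\<dots> \<le> (\<Sum>i\<in>{1..k}. \<Sum>j\<in>{1..k}. involution_count (n - 1) + involution_count (n - 2))"
  proof (intro sum_mono)
    fix i j assume "i \<in> {1..k}" "j \<in> {1..k}"
    then have ij: "i \<in> {1..n}" "j \<in> {1..n}"
      using assms by auto
    show "card (?maps i j) \<le> involution_count (n - 1) + involution_count (n - 2)"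
      using card_involutions_fixing[OF ij(1)] card_involutions_swapping[OF ij]
      by (cases "i = j") simp_all
  qed
  finally show ?thesis
    by simp
qed

lemma non_spread_involutions_ratio_tendsto_0:
  "(\<lambda>n. card (involutions n - spread_involutions n k) / involution_count n) \<longlonglongrightarrow> 0"
proof (rule tendsto_sandwich[OF _ _ tendsto_const])
  let ?bound = "\<lambda>n. real (k * k) * (involution_count (n - 1) / involution_count n
                                   + involution_count (n - 2) / involution_count n)"
  show "\<forall>\<^sub>F n in sequentially. 0 \<le> card (involutions n - spread_involutions n k) / involution_count n"
    by simp
  have "card (involutions n - spread_involutions n k) / involution_count n \<le> ?bound n"
    if "k \<le> n" for n
  proof -
    have "real (card (involutions n - spread_involutions n k))
        \<le> real (k * k) * (involution_count (n - 1) + involution_count (n - 2))"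
      using of_nat_mono[OF card_non_spread_involutions_le[OF that], where 'a = real] by simp
    moreover have "?bound n = real (k * k) * (involution_count (n - 1) + involution_count (n - 2))
        / involution_count n"
      using card_involutions_pos[of n] by (simp add: field_simps)
    ultimately show ?thesis
      by (simp add: divide_right_mono)
  qed
  then show "\<forall>\<^sub>F n in sequentially.
      card (involutions n - spread_involutions n k) / involution_count n \<le> ?bound n"
    unfolding eventually_sequentially by blast
  show "?bound \<longlonglongrightarrow> 0"
    using tendsto_mult[OF tendsto_const tendsto_add[OF involution_count_pred_ratio_tendsto_0
          involution_count_pred2_ratio_tendsto_0], of "real (k * k)"] by simp
qed

lemma abs_ratio_sub_inverse_le:
  fixes a b c F N :: real
  assumes "N = F * a + b" and "a \<le> c" "c \<le> a + b" and "1 \<le> F" "0 \<le> b" "0 < N"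
  shows "\<bar>c / N - 1 / F\<bar> \<le> b / N"
proof -
  have "a / N + b / (F * N) = (F * a + b) / (F * N)"
    using assms(4,6) by (simp add: field_simps)
  also have "\<dots> = 1 / F"
    using assms(1,6) by simp
  finally have "c / N - 1 / F = (c - a) / N - b / (F * N)"
    by (simp add: diff_divide_distrib)
  moreover have "0 \<le> (c - a) / N" "(c - a) / N \<le> b / N"
    using assms by (simp_all add: divide_right_mono)
  moreover have "0 \<le> b / (F * N)" "b / (F * N) \<le> b / N"
    using assms by (simp_all add: frac_le)
  ultimately show ?thesis
    by linarith
qed

lemma involutions_containing_estimate:
  assumes \<sigma>: "\<sigma> permutes {1..k}" and "k \<le> n"
  shows "\<bar>card {\<phi> \<in> involutions n. contains_subseq n \<phi> k \<sigma>} / involution_count n - 1 / fact k\<bar>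
    \<le> card (involutions n - spread_involutions n k) / involution_count n"
proof -
  let ?A = "order_class n k \<sigma>" and ?B = "involutions n - spread_involutions n k"
    and ?C = "{\<phi> \<in> involutions n. contains_subseq n \<phi> k \<sigma>}"
  have "spread_involutions n k \<subseteq> involutions n"
    by (auto simp: spread_involutions_def)
  then have "involution_count n = card (spread_involutions n k) + card ?B"
    using card_Diff_subset[OF finite_subset[OF _ finite_involutions]] card_mono[OF finite_involutions]
    by (metis le_add_diff_inverse)
  then have total: "real (involution_count n) = fact k * real (card ?A) + real (card ?B)"
    using card_spread_involutions[OF assms] by simp
  have contains: "contains_subseq n f k \<sigma> \<longleftrightarrow> strict_mono_on {1..k} (f \<circ> \<sigma>)" if "f \<in> involutions n" for f
    using contains_subseq_iff_strict_mono_on[OF that assms] .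
  have "?A \<subseteq> ?C"
    using contains by (auto simp: order_class_def)
  then have "card ?A \<le> card ?C"
    by (intro card_mono) (simp_all add: finite_involutions)
  have "?C \<subseteq> ?A \<union> ?B"
    using contains by (auto simp: order_class_def spread_involutions_def)
  then have "card ?C \<le> card ?A + card ?B"
    by (intro order.trans[OF card_mono card_Un_le]) (simp_all add: finite_involutions order_class_def)
  show ?thesis
  proof (rule abs_ratio_sub_inverse_le[OF total])
    show "real (card ?A) \<le> real (card ?C)" "real (card ?C) \<le> real (card ?A) + real (card ?B)"
      using \<open>card ?A \<le> card ?C\<close> \<open>card ?C \<le> card ?A + card ?B\<close> by simp_all
    show "(1 :: real) \<le> fact k" "0 \<le> real (card ?B)" "0 < real (involution_count n)"
      using card_involutions_pos[of n] by simp_all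
  qed
qed

theorem lemma1:
  fixes \<sigma> :: "nat \<Rightarrow> nat" and k :: nat
  assumes "\<sigma> permutes {1..k}"
  shows "(\<lambda>n. real (card {\<phi> \<in> involutions n. contains_subseq n \<phi> k \<sigma>})
              / real (card (involutions n)))
         \<longlonglongrightarrow> 1 / fact k"
proof -
  let ?ratio = "\<lambda>n. real (card {\<phi> \<in> involutions n. contains_subseq n \<phi> k \<sigma>}) / involution_count n"
  let ?err = "\<lambda>n. card (involutions n - spread_involutions n k) / involution_count n"
  have "\<forall>\<^sub>F n in sequentially. \<bar>?ratio n - 1 / fact k\<bar> \<le> ?err n"
    using involutions_containing_estimate[OF assms] unfolding eventually_sequentially by blast
  then have "\<forall>\<^sub>F n in sequentially. 1 / fact k - ?err n \<le> ?ratio n"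
    and "\<forall>\<^sub>F n in sequentially. ?ratio n \<le> 1 / fact k + ?err n"
    by (eventually_elim, simp only: abs_le_iff, linarith)+
  moreover have "(\<lambda>n. 1 / fact k - ?err n) \<longlonglongrightarrow> 1 / fact k" "(\<lambda>n. 1 / fact k + ?err n) \<longlonglongrightarrow> 1 / fact k"
    using tendsto_diff[OF tendsto_const non_spread_involutions_ratio_tendsto_0]
      tendsto_add[OF tendsto_const non_spread_involutions_ratio_tendsto_0] by simp_all
  ultimately show ?thesis
    by (rule tendsto_sandwich)
qed

end
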